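(* Let $w$ be an infinite word on $\mathcal{A}$ with infinitely many palindromic prefixes, and let $(n_i)_{i\ge1}$ be the increasing sequence of the lengths of its palindromic prefixes ($n_1=0$). The following are equivalent: (i) $n_{i+1}\le 2n_i+1$ for all $i\ge1$; (ii) there is a function $\psi$ (as in the context) with $w=w_\psi$; (iii) there is a reduced function $\psi$ with $w=w_\psi$. Moreover, the reduced function $\psi$ in (iii) is unique.
   Context: $\mathcal{A}$ is an alphabet (finite or infinite) disjoint from $\mathbb{N}^*=\{1,2,\dots\}$; $\varepsilon$ is a palindrome. The functions considered are maps $\psi:\mathbb{N}^*\to\mathbb{N}^*\sqcup\mathcal{A}$ such that for every $n\ge1$ either $\psi(n)\in\mathcal{A}$ or $1\le\psi(n)\le n-1$. Associated words: $\pi_1=\varepsilon$ and, for $i\ge1$: if $\psi(i)\in\mathcal{A}$, $\pi_{i+1}=\pi_i\,\psi(i)\,\pi_i$; if $\psi(i)\in\mathbb{N}^*$, then $\pi_{\psi(i)}$ is a prefix of $\pi_i$, and writing $\pi_i=\pi_{\psi(i)}b_i$, $\pi_{i+1}=\pi_ib_i$. Each $\pi_i$ is a palindrome and a proper prefix of $\pi_{i+1}$; $w_\psi$ is the infinite word having all $\pi_i$ as prefixes. Let $(t_k)_{k\ge0}$ be the (finite or infinite) family, in increasing order, of all $n\ge1$ with $\psi(n)\in\mathcal{A}$ or $1\le\psi(n)\le n-2$. $\psi$ is reduced if for every $k\ge1$ such that $t_k$ exists: $\psi(t_k)\neq\psi(t_{k-1})$, and either $\psi(t_k)\in\mathcal{A}$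 or $\psi(t_k)<t_{k-1}$. *)

theory Defs
  imports Main "HOL-Library.Infinite_Set"
begin

text \<open>Alphabet: the type 'a. A function psi : N* -> N* + A is modelled as
  nat => 'a + nat, with Inl a a letter and Inr m a positive integer.
  Only the values at n >= 1 matter.\<close>

definition admissible :: "(nat \<Rightarrow> 'a + nat) \<Rightarrow> bool" where
  "admissible \<psi> \<longleftrightarrow> (\<forall>n\<ge>1. case \<psi> n of Inl a \<Rightarrow> True | Inr m \<Rightarrow> 1 \<le> m \<and> m \<le> n - 1)"

text \<open>pis psi k = [pi_1, ..., pi_(k+1)].\<close>
primrec pis :: "(nat \<Rightarrow> 'a + nat) \<Rightarrow> nat \<Rightarrow> 'a list list" where
  "pis \<psi> 0 = [[]]"
| "pis \<psi> (Suc k) =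
     (let L = pis \<psi> k; p = last L
      in L @ [case \<psi> (Suc k) of
                Inl a \<Rightarrow> p @ [a] @ p
              | Inr m \<Rightarrow> p @ drop (length (L ! (m - 1))) p])"

definition pi :: "(nat \<Rightarrow> 'a + nat) \<Rightarrow> nat \<Rightarrow> 'a list" where
  "pi \<psi> i = pis \<psi> (i - 1) ! (i - 1)"

definition prefix_of_inf :: "'a list \<Rightarrow> (nat \<Rightarrow> 'a) \<Rightarrow> bool" where
  "prefix_of_inf u w \<longleftrightarrow> (\<forall>j<length u. u ! j = w j)"

definition is_w_psi :: "(nat \<Rightarrow> 'a + nat) \<Rightarrow> (nat \<Rightarrow> 'a) \<Rightarrow> bool" where
  "is_w_psi \<psi> w \<longleftrightarrow> (\<forall>i\<ge>1. prefix_of_inf (pi \<psi> i) w)"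

definition tset :: "(nat \<Rightarrow> 'a + nat) \<Rightarrow> nat set" where
  "tset \<psi> = {n. n \<ge> 1 \<and> (case \<psi> n of Inl a \<Rightarrow> True | Inr m \<Rightarrow> 1 \<le> m \<and> m \<le> n - 2)}"

definition reduced :: "(nat \<Rightarrow> 'a + nat) \<Rightarrow> bool" where
  "reduced \<psi> \<longleftrightarrow> admissible \<psi> \<and>
     (\<forall>s t. s \<in> tset \<psi> \<and> t \<in> tset \<psi> \<and> s < t \<and> (\<forall>u\<in>tset \<psi>. \<not> (s < u \<and> u < t)) \<longrightarrow>
        \<psi> t \<noteq> \<psi> s \<and> (case \<psi> t of Inl a \<Rightarrow> True | Inr m \<Rightarrow> m < s))"

definition pal_prefix_lengths :: "(nat \<Rightarrow> 'a) \<Rightarrow> nat set" where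
  "pal_prefix_lengths w = {n. \<forall>j<n. w j = w (n - 1 - j)}"

end

(*
  Every |pi_i| is the length of a palindromic prefix of w_psi, and |pi_(i+1)| <= 2 |pi_i| + 1.
  Conversely, under the growth condition each palindromic prefix arises from the previous one
  either by a new central letter or by reflecting a shorter palindromic prefix, and this defines
  psi directly.

  The core fact is that psi is reduced exactly when the pi_i are all the palindromic prefixes
  of w.  Between consecutive elements s < t of tset the lengths |pi_j| grow arithmetically with
  difference d = |pi_(s+1)| - |pi_s|, the least period of pi_t.  If the reducedness condition
  fails at (s, t), the period d survives into pi_(t+1), and |pi_(t+1)| - d is an additional
  palindromic prefix.  Conversely, a palindromic prefix strictly between pi_t and pi_(t+1)
  forces d to be a period of pi_(t+1) dividing |pi_(t+1)| - |pi_t|; this rests on a Fine-Wilf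
  argument for palindromes (two palindromic prefixes act as two reflections of the periodic
  extension of the word, so their distance combines with the period into a gcd period), and a
  congruence computation modulo d then contradicts reducedness.  For reduced psi the lengths
  |pi_i| therefore enumerate the palindromic prefix lengths, and these lengths determine psi.
*)
theory Submission
  imports Defs "HOL-Library.Sublist"
begin

section \<open>Palindromic prefixes and periods\<close>

abbreviation pal_prefix :: "(nat \<Rightarrow> 'a) \<Rightarrow> nat \<Rightarrow> bool" where
  "pal_prefix w n \<equiv> n \<in> pal_prefix_lengths w"

definition prefix_period :: "(nat \<Rightarrow> 'a) \<Rightarrow> nat \<Rightarrow> nat \<Rightarrow> bool" where
  "prefix_period w q n \<longleftrightarrow> (\<forall>j. j + q < n \<longrightarrow> w j = w (j + q))"

definition no_pal_prefix_between :: "(nat \<Rightarrow> 'a) \<Rightarrow> nat \<Rightarrow> nat \<Rightarrow> bool" where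
  "no_pal_prefix_between w a b \<longleftrightarrow> (\<forall>c. a < c \<longrightarrow> c < b \<longrightarrow> \<not> pal_prefix w c)"

lemma pal_prefixI: "(\<And>j. j < n \<Longrightarrow> w j = w (n - 1 - j)) \<Longrightarrow> pal_prefix w n"
  unfolding pal_prefix_lengths_def by blast

lemma pal_prefixD: "pal_prefix w n \<Longrightarrow> j < n \<Longrightarrow> w j = w (n - 1 - j)"
  unfolding pal_prefix_lengths_def by blast

lemma pal_prefix_0: "pal_prefix w 0"
  by (simp add: pal_prefix_lengths_def)

lemma pal_prefix_iff_rev: "pal_prefix w n \<longleftrightarrow> rev (map w [0..<n]) = map w [0..<n]"
proof
  assume pal: "pal_prefix w n"
  show "rev (map w [0..<n]) = map w [0..<n]"
  proof (rule nth_equalityI)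
    fix j assume "j < length (rev (map w [0..<n]))"
    then show "rev (map w [0..<n]) ! j = map w [0..<n] ! j"
      using pal_prefixD[OF pal, of j] by (simp add: rev_nth)
  qed simp
next
  assume rev: "rev (map w [0..<n]) = map w [0..<n]"
  show "pal_prefix w n"
  proof (rule pal_prefixI)
    fix j assume "j < n"
    then show "w j = w (n - 1 - j)"
      using arg_cong[OF rev, of "\<lambda>u. u ! j"] by (simp add: rev_nth)
  qed
qed

lemma no_pal_prefix_betweenD:
  "no_pal_prefix_between w a b \<Longrightarrow> pal_prefix w c \<Longrightarrow> a < c \<Longrightarrow> b \<le> c"
  unfolding no_pal_prefix_between_def using leI by blast

lemma prefix_periodD: "prefix_period w q n \<Longrightarrow> j + q < n \<Longrightarrow> w j = w (j + q)"
  unfolding prefix_period_def by blast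

lemma prefix_period_mono: "prefix_period w q n \<Longrightarrow> m \<le> n \<Longrightarrow> prefix_period w q m"
  unfolding prefix_period_def by auto

lemma prefix_period_iff_mod:
  assumes "0 < q"
  shows "prefix_period w q n \<longleftrightarrow> (\<forall>j<n. w j = w (j mod q))"
proof
  assume per: "prefix_period w q n"
  show "\<forall>j<n. w j = w (j mod q)"
  proof (intro allI impI)
    fix j assume "j < n"
    then show "w j = w (j mod q)"
    proof (induction j rule: less_induct)
      case (less j)
      show ?case
      proof (cases "j < q")
        case False
        then have "w (j - q) = w j"
          using prefix_periodD[OF per, of "j - q"] less.prems by simp
        moreover have "w (j - q) = w ((j - q) mod q)"
          using less False assms by simp
        ultimately show ?thesis
          using False by (simp add: le_mod_geq)
      qed simp
    qed
  qed
next
  assume "\<forall>j<n. w j = w (j mod q)"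
  then show "prefix_period w q n"
    unfolding prefix_period_def by (metis add_lessD1 mod_add_self2)
qed

lemma prefix_period_of_pal_prefixes:
  assumes "a < b" and pa: "pal_prefix w a" and pb: "pal_prefix w b"
  shows "prefix_period w (b - a) b"
  unfolding prefix_period_def
proof (intro allI impI)
  fix j assume j: "j + (b - a) < b"
  have "b - 1 - (j + (b - a)) = a - 1 - j"
    using j assms(1) by arith
  then have "w (j + (b - a)) = w (a - 1 - j)"
    using pal_prefixD[OF pb j] by simp
  also have "\<dots> = w j"
    using pal_prefixD[OF pa, of j] j by simp
  finally show "w j = w (j + (b - a))" by simp
qed

lemma pal_prefix_diff_period:
  assumes pb: "pal_prefix w b" and per: "prefix_period w q b" and "q \<le> b"
  shows "pal_prefix w (b - q)"
proof (rule pal_prefixI)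
  fix j assume j: "j < b - q"
  have "b - 1 - (b - q - 1 - j) = j + q"
    using j by arith
  then have "w (b - q - 1 - j) = w (j + q)"
    using pal_prefixD[OF pb, of "b - q - 1 - j"] j by (simp add: add.commute)
  also have "\<dots> = w j"
    using prefix_periodD[OF per, of j] j by simp
  finally show "w j = w (b - q - 1 - j)" by (simp add: add.commute)
qed

lemma pal_prefix_reflect:
  assumes "a < b" "b \<le> 2 * a" and pa: "pal_prefix w a" and pb: "pal_prefix w b"
  shows "pal_prefix w (2 * a - b)"
proof -
  have "prefix_period w (b - a) a"
    using prefix_period_mono[OF prefix_period_of_pal_prefixes[OF assms(1) pa pb]] assms(1) by simp
  moreover have "b - a \<le> a" "a - (b - a) = 2 * a - b"
    using assms(1,2) by auto
  ultimately show ?thesis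
    using pal_prefix_diff_period[OF pa] by metis
qed

lemma prefix_period_dvd_extend:
  assumes "prefix_period w d a" "prefix_period w p b" "d dvd p" "p \<le> a" "0 < d" "0 < p"
  shows "prefix_period w d b"
proof -
  have "w j = w (j mod d)" if "j < b" for j
  proof -
    have "w j = w (j mod p)"
      using assms(2,6) that by (simp add: prefix_period_iff_mod)
    also have "\<dots> = w (j mod p mod d)"
      using assms(1,4,5) mod_less_divisor[OF assms(6), of j] by (simp add: prefix_period_iff_mod)
    finally show ?thesis
      using mod_mod_cancel[OF assms(3)] by simp
  qed
  then show ?thesis
    using assms(5) by (simp add: prefix_period_iff_mod)
qed

lemma prefix_period_extend_copy:
  assumes per: "prefix_period w d a" and "0 < d" and "c + L \<le> a" and "d dvd a - c"
    and copy: "\<And>z. z < L \<Longrightarrow> w (a + z) = w (c + z)"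
  shows "prefix_period w d (a + L)"
proof -
  have "w j = w (j mod d)" if j: "j < a + L" for j
  proof (cases "j < a")
    case True
    then show ?thesis using per assms(2) by (simp add: prefix_period_iff_mod)
  next
    case False
    define z where "z = j - a"
    have z: "j = a + z" "z < L" using False j unfolding z_def by auto
    have "w j = w (c + z)" using copy z by simp
    also have "\<dots> = w ((c + z) mod d)"
      using per assms(2,3) z by (simp add: prefix_period_iff_mod)
    also have "(c + z) mod d = j mod d"
      using mod_eq_dvd_iff_nat[of "c + z" j d] assms(3,4) z by simp
    finally show ?thesis .
  qed
  then show ?thesis
    using assms(2) by (simp add: prefix_period_iff_mod)
qed

lemma prefix_period_ge_gap:
  assumes "no_pal_prefix_between w a' a" and "pal_prefix w a" and "prefix_period w g a"
    and "0 < g" "g \<le> a"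
  shows "a - a' \<le> g"
proof -
  have "pal_prefix w (a - g)"
    using pal_prefix_diff_period assms(2,3,5) .
  then have "\<not> a' < a - g"
    using no_pal_prefix_betweenD[OF assms(1)] assms(4,5) by fastforce
  then show ?thesis by simp
qed

lemma no_pal_prefix_between_mirror:
  assumes gap: "no_pal_prefix_between w a' a" and "a' < a" and pa: "pal_prefix w a"
  shows "no_pal_prefix_between w a (2 * a - a')"
  unfolding no_pal_prefix_between_def
proof (intro allI impI notI)
  fix c assume "a < c" "c < 2 * a - a'" and pc: "pal_prefix w c"
  then have "pal_prefix w (2 * a - c)"
    using pal_prefix_reflect[OF _ _ pa pc] by simp
  moreover have "a' < 2 * a - c" "2 * a - c < a"
    using \<open>a < c\<close> \<open>c < 2 * a - a'\<close> by auto
  ultimately show False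
    using gap unfolding no_pal_prefix_between_def by blast
qed

lemma int_period_mult:
  fixes f :: "int \<Rightarrow> 'a"
  assumes per: "\<And>z. f (z + p) = f z"
  shows "f (z + k * p) = f z"
proof -
  have "\<forall>z. f (z + k * p) = f z"
  proof (induction k rule: int_induct[where k = 0])
    case (step1 i)
    then show ?case
      by (metis (no_types) add.assoc per distrib_right mult_1)
  next
    case (step2 i)
    show ?case
    proof
      fix z
      have "f (z + (i - 1) * p) = f ((z - p) + i * p)"
        by (simp add: algebra_simps)
      also have "\<dots> = f (z - p)"
        using step2.IH by simp
      also have "\<dots> = f (z - p + p)"
        using per[of "z - p"] by simp
      finally show "f (z + (i - 1) * p) = f z" by simp
    qed
  qed simp
  then show ?thesis ..
qed

lemma int_period_gcd:
  fixes f :: "int \<Rightarrow> 'a"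
  assumes "\<And>z. f (z + p) = f z" and "\<And>z. f (z + q) = f z"
  shows "f (z + gcd p q) = f z"
proof -
  obtain u v where "u * p + v * q = gcd p q"
    using bezout_int by blast
  then have "f (z + gcd p q) = f ((z + u * p) + v * q)"
    by (simp add: algebra_simps)
  also have "\<dots> = f z"
    using int_period_mult[of f, OF assms(1)] int_period_mult[of f, OF assms(2)] by simp
  finally show ?thesis .
qed

definition periodic_extension :: "(nat \<Rightarrow> 'a) \<Rightarrow> nat \<Rightarrow> int \<Rightarrow> 'a" where
  "periodic_extension w q z = w (nat (z mod int q))"

lemma periodic_extension_eq:
  "prefix_period w q n \<Longrightarrow> 0 < q \<Longrightarrow> j < n \<Longrightarrow> periodic_extension w q (int j) = w j"
  unfolding periodic_extension_def by (simp add: prefix_period_iff_mod flip: of_nat_mod)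

lemma periodic_extension_period: "periodic_extension w q (z + int q) = periodic_extension w q z"
  by (simp add: periodic_extension_def)

lemma periodic_extension_reflect:
  assumes per: "prefix_period w q n" and "0 < q" and pal: "pal_prefix w L" and "L \<le> n"
    and "q \<le> L + 1"
  shows "periodic_extension w q (int L - 1 - z) = periodic_extension w q z"
proof -
  define r where "r = nat (z mod int q)"
  have r: "r < q" "int r = z mod int q"
    using assms(2) unfolding r_def by (auto simp: nat_less_iff)
  have fz: "periodic_extension w q z = w r"
    unfolding periodic_extension_def r_def ..
  have "(int L - 1 - z) mod int q = (int L - 1 - int r) mod int q"
    using r(2) by (metis mod_diff_right_eq)
  then have reflect: "periodic_extension w q (int L - 1 - z) = periodic_extension w q (int L - 1 - int r)"
    unfolding periodic_extension_def by simp
  have "periodic_extension w q (int L - 1 - int r) = w r"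
  proof (cases "r < L")
    case True
    then have e: "int L - 1 - int r = int (L - 1 - r)"
      by simp
    have "periodic_extension w q (int (L - 1 - r)) = w (L - 1 - r)"
      by (rule periodic_extension_eq[OF per assms(2)]) (use assms(4) True in simp)
    then have "periodic_extension w q (int L - 1 - int r) = w (L - 1 - r)"
      by (simp only: e)
    also have "\<dots> = w r"
      using pal_prefixD[OF pal True] by simp
    finally show ?thesis .
  next
    case False
    \<comment> \<open>then \<open>r = L = q - 1\<close>, which is its own mirror image modulo \<open>q\<close>\<close>
    then have "int L - 1 - int r = int r - int q"
      using r(1) assms(5) by linarith
    then have "periodic_extension w q (int L - 1 - int r) = periodic_extension w q (int r)"
      using periodic_extension_period[of w q "int r - int q"] by simp
    also have "\<dots> = w r"
      using r(1) unfolding periodic_extension_def by simp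
    finally show ?thesis .
  qed
  then show ?thesis
    using reflect fz by simp
qed

lemma prefix_period_gcd:
  assumes per: "prefix_period w q n" and q: "0 < q"
    and pa: "pal_prefix w a" and pb: "pal_prefix w b" and "a < b" "b \<le> n" "q \<le> a + 1"
  shows "prefix_period w (gcd q (b - a)) n"
proof -
  let ?f = "periodic_extension w q"
  have reflect_a: "?f (int a - 1 - z) = ?f z" for z
    using periodic_extension_reflect[OF per q pa] assms(5-7) by simp
  have reflect_b: "?f (int b - 1 - z) = ?f z" for z
    using periodic_extension_reflect[OF per q pb] assms(5-7) by simp
  have shift: "?f (z + int (b - a)) = ?f z" for z
  proof -
    have "z + int (b - a) = int b - 1 - (int a - 1 - z)"
      using assms(5) by simp
    then show ?thesis
      using reflect_a reflect_b by metis
  qed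
  have "?f (z + int (gcd q (b - a))) = ?f z" for z
    using int_period_gcd[of ?f, OF periodic_extension_period shift] by simp
  then show ?thesis
    unfolding prefix_period_def
    using periodic_extension_eq[OF per q] by (metis add_lessD1 of_nat_add)
qed

lemma least_period_dvd:
  assumes per: "prefix_period w p n" and p: "0 < p"
    and p_min: "\<And>q. 0 < q \<Longrightarrow> prefix_period w q n \<Longrightarrow> p \<le> q"
    and "pal_prefix w a" "pal_prefix w b" "a < b" "b \<le> n" "p \<le> a + 1"
  shows "p dvd b - a"
proof -
  have "prefix_period w (gcd p (b - a)) n"
    using prefix_period_gcd[OF per p assms(4-8)] .
  then have "p \<le> gcd p (b - a)"
    using p_min p by simp
  moreover have "gcd p (b - a) \<le> p"
    by (rule gcd_le1_nat) (use p in simp)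
  ultimately have "gcd p (b - a) = p"
    by linarith
  then show ?thesis
    by (metis gcd_dvd2)
qed

lemma least_period_extends:
  assumes pa: "pal_prefix w a" and pb: "pal_prefix w b" and pc: "pal_prefix w c"
    and ac: "a < c" and cb: "c < b" and b_le: "b \<le> 2 * a + 1"
    and per_d: "prefix_period w d a" and d: "0 < d"
    and d_min: "\<And>g. 0 < g \<Longrightarrow> prefix_period w g a \<Longrightarrow> d \<le> g"
  shows "prefix_period w d b \<and> d dvd b - a"
proof -
  define p where "p = (LEAST p. 0 < p \<and> prefix_period w p b)"
  have bc: "0 < b - c \<and> prefix_period w (b - c) b"
    using prefix_period_of_pal_prefixes[OF cb pc pb] cb by simp
  have p: "0 < p" "prefix_period w p b"
    using LeastI[of "\<lambda>p. 0 < p \<and> prefix_period w p b", OF bc] unfolding p_def by auto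
  have p_min: "p \<le> q" if "0 < q" "prefix_period w q b" for q
    unfolding p_def by (rule Least_le) (use that in simp)
  have p_lt: "p < b - a" and p_le: "p \<le> a"
    using p_min[of "b - c"] bc ac cb b_le by auto
  have per_p: "prefix_period w p a"
    using prefix_period_mono[OF p(2)] ac cb by simp
  have "p dvd b - a"
    using least_period_dvd[OF p(2,1) p_min pa pb] ac cb p_le by simp
  then obtain k where k: "b - a = p * k" ..
  have "k \<noteq> 0" "k \<noteq> 1"
    using k p_lt by auto
  with k have "2 * p \<le> b - a"
    by (metis One_nat_def less_2_cases_iff mult.commute mult_le_mono1 not_less)
  then have "d \<le> (a - p) + 1"
    using d_min[OF p(1) per_p] b_le p_le by linarith
  moreover have "pal_prefix w (a - p)"
    using pal_prefix_diff_period[OF pa per_p p_le] .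
  ultimately have "d dvd a - (a - p)"
    using least_period_dvd[OF per_d d d_min _ pa, of "a - p"] p(1) p_le by simp
  then have "d dvd p"
    using p_le by simp
  then have per_db: "prefix_period w d b"
    using prefix_period_dvd_extend[OF per_d p(2) _ p_le d p(1)] by simp
  then have "p = d"
    using p_min[OF d] d_min[OF p(1) per_p] by simp
  with per_db \<open>p dvd b - a\<close> show ?thesis by blast
qed

lemma map_upt_append_period:
  assumes "prefix_period w p (a + L)" "p \<le> a"
  shows "map w [0..<a] @ map w [a - p..<a - p + L] = map w [0..<a + L]"
proof (rule nth_equalityI)
  fix j assume "j < length (map w [0..<a] @ map w [a - p..<a - p + L])"
  then show "(map w [0..<a] @ map w [a - p..<a - p + L]) ! j = map w [0..<a + L] ! j"
    using prefix_periodD[OF assms(1), of "j - p"] assms(2) by (auto simp: nth_append)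
qed simp

lemma map_pal_prefix_Inl:
  assumes "pal_prefix w a" "pal_prefix w (2 * a + 1)"
  shows "map w [0..<a] @ w a # map w [0..<a] = map w [0..<2 * a + 1]"
proof -
  have "prefix_period w (a + 1) (a + 1 + a)"
    using prefix_period_of_pal_prefixes[OF _ assms] by (simp add: mult_2)
  from map_upt_append_period[OF this] show ?thesis
    by (simp add: mult_2)
qed

lemma map_pal_prefix_Inr:
  assumes "pal_prefix w a" "pal_prefix w b" "a < b" "b \<le> 2 * a"
  shows "map w [0..<a] @ drop (2 * a - b) (map w [0..<a]) = map w [0..<b]"
proof -
  have "prefix_period w (b - a) (a + (b - a))"
    using prefix_period_of_pal_prefixes[OF assms(3,1,2)] assms(3) by simp
  from map_upt_append_period[OF this] show ?thesis
    using assms(3,4) by (simp add: drop_map mult_2)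
qed

section \<open>The palindromes \<open>\<pi>\<^sub>i\<close>\<close>

lemma length_pis: "length (pis \<psi> k) = Suc k"
  by (induction k) (auto simp: Let_def)

lemma pis_nth_stable:
  assumes "j \<le> k" "k \<le> K"
  shows "pis \<psi> K ! j = pis \<psi> k ! j"
  using assms(2)
proof (induction K rule: dec_induct)
  case (step K)
  then show ?case
    using assms(1) length_pis[of \<psi> K] by (simp add: Let_def nth_append)
qed simp

lemma pi_1 [simp]: "pi \<psi> (Suc 0) = []"
  by (simp add: pi_def)

lemma pi_Suc:
  assumes "1 \<le> i"
  shows "pi \<psi> (Suc i) = pi \<psi> i @
    (case \<psi> i of Inl a \<Rightarrow> [a] @ pi \<psi> i | Inr m \<Rightarrow> drop (length (pis \<psi> (i - 1) ! (m - 1))) (pi \<psi> i))"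
proof -
  obtain k where k: "i = Suc k"
    using assms by (cases i) auto
  have "pis \<psi> k \<noteq> []"
    using length_pis[of \<psi> k] by auto
  then have "last (pis \<psi> k) = pis \<psi> k ! k"
    by (simp add: last_conv_nth length_pis)
  then show ?thesis
    using length_pis[of \<psi> k] k by (simp add: pi_def Let_def nth_append split: sum.split)
qed

lemma pi_Suc_Inl: "1 \<le> i \<Longrightarrow> \<psi> i = Inl a \<Longrightarrow> pi \<psi> (Suc i) = pi \<psi> i @ a # pi \<psi> i"
  using pi_Suc[of i \<psi>] by simp

lemma pi_Suc_Inr:
  assumes "1 \<le> i" "\<psi> i = Inr m" "m \<le> i"
  shows "pi \<psi> (Suc i) = pi \<psi> i @ drop (length (pi \<psi> m)) (pi \<psi> i)"
proof -
  have "pis \<psi> (i - 1) ! (m - 1) = pi \<psi> m"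
    unfolding pi_def using pis_nth_stable[of "m - 1" "m - 1" "i - 1" \<psi>] assms(3) by simp
  then show ?thesis
    using pi_Suc[OF assms(1), of \<psi>] assms(2) by simp
qed

lemma admissible_Inr: "admissible \<psi> \<Longrightarrow> 1 \<le> i \<Longrightarrow> \<psi> i = Inr m \<Longrightarrow> 1 \<le> m \<and> m < i"
  unfolding admissible_def by (drule spec[of _ i]) auto

lemma admissible_1: "admissible \<psi> \<Longrightarrow> \<exists>a. \<psi> (Suc 0) = Inl a"
  using admissible_Inr[of \<psi> "Suc 0"] by (cases "\<psi> (Suc 0)") auto

lemma prefix_pi_Suc: "admissible \<psi> \<Longrightarrow> 1 \<le> i \<Longrightarrow> prefix (pi \<psi> i) (pi \<psi> (Suc i))"
  by (cases "\<psi> i") (auto simp: pi_Suc_Inl pi_Suc_Inr dest: admissible_Inr)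

lemma prefix_pi:
  assumes "admissible \<psi>" "1 \<le> m" "m \<le> i"
  shows "prefix (pi \<psi> m) (pi \<psi> i)"
  using assms(3)
proof (induction i rule: dec_induct)
  case (step i)
  then show ?case
    using prefix_pi_Suc[OF assms(1), of i] assms(2) prefix_order.trans by auto
qed simp

lemma length_pi_Suc_Inl:
  "1 \<le> i \<Longrightarrow> \<psi> i = Inl a \<Longrightarrow> length (pi \<psi> (Suc i)) = 2 * length (pi \<psi> i) + 1"
  by (simp add: pi_Suc_Inl)

lemma length_pi_Suc_Inr:
  assumes adm: "admissible \<psi>" and i: "1 \<le> i" and Inr: "\<psi> i = Inr m"
  shows "length (pi \<psi> (Suc i)) = 2 * length (pi \<psi> i) - length (pi \<psi> m)"
proof -
  have m: "1 \<le> m" "m < i"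
    using admissible_Inr[OF adm i Inr] by auto
  then have "length (pi \<psi> m) \<le> length (pi \<psi> i)"
    using prefix_length_le[OF prefix_pi[OF adm m(1)]] by simp
  then show ?thesis
    using pi_Suc_Inr[where \<psi> = \<psi>, OF i Inr] m by simp
qed

lemma length_pi_less:
  assumes adm: "admissible \<psi>"
  shows "1 \<le> j \<Longrightarrow> j < i \<Longrightarrow> length (pi \<psi> j) < length (pi \<psi> i)"
proof (induction i arbitrary: j)
  case (Suc i)
  then have i: "1 \<le> i"
    by simp
  have step: "length (pi \<psi> i) < length (pi \<psi> (Suc i))"
  proof (cases "\<psi> i")
    case (Inl a)
    then show ?thesis
      using length_pi_Suc_Inl[where \<psi> = \<psi>, OF i Inl] by simp
  next
    case (Inr m)
    have "1 \<le> m" "m < i"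
      using admissible_Inr[OF adm i Inr] by auto
    then have "length (pi \<psi> m) < length (pi \<psi> i)"
      using Suc.IH by blast
    then show ?thesis
      using length_pi_Suc_Inr[OF adm i Inr] by simp
  qed
  show ?case
  proof (cases "j = i")
    case False
    then have "length (pi \<psi> j) < length (pi \<psi> i)"
      using Suc by simp
    then show ?thesis
      using step by simp
  qed (use step in simp)
qed simp

lemma rev_pi: "admissible \<psi> \<Longrightarrow> 1 \<le> i \<Longrightarrow> rev (pi \<psi> i) = pi \<psi> i"
proof (induction i rule: less_induct)
  case (less i)
  show ?case
  proof (cases "i = 1")
    case False
    then obtain k where k: "i = Suc k" "1 \<le> k"
      using less.prems by (cases i) auto
    have IH: "rev (pi \<psi> k) = pi \<psi> k"
      using less k by simp
    show ?thesis
    proof (cases "\<psi> k")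
      case (Inl a)
      then show ?thesis
        using IH k by (simp add: pi_Suc_Inl)
    next
      case (Inr m)
      have m: "1 \<le> m" "m < k"
        using admissible_Inr[OF less.prems(1) k(2) Inr] by auto
      obtain u where u: "pi \<psi> k = pi \<psi> m @ u"
        using prefix_pi[OF less.prems(1) m(1), of k] m(2) by (auto elim: prefixE)
      have pi_m: "rev (pi \<psi> m) = pi \<psi> m"
        using less.IH[of m] less.prems(1) m k by simp
      have pi_k: "pi \<psi> k = rev u @ pi \<psi> m"
        using IH u pi_m by (metis rev_append)
      have "pi \<psi> i = pi \<psi> k @ u"
        using pi_Suc_Inr[where \<psi> = \<psi>, OF k(2) Inr] m u k by simp
      then show ?thesis
        using IH pi_k u by simp
    qed
  qed simp
qed

lemma prefix_of_inf_iff: "prefix_of_inf u w \<longleftrightarrow> u = map w [0..<length u]"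
proof
  assume "prefix_of_inf u w"
  then show "u = map w [0..<length u]"
    unfolding prefix_of_inf_def by (intro nth_equalityI) simp_all
next
  assume "u = map w [0..<length u]"
  then show "prefix_of_inf u w"
    unfolding prefix_of_inf_def by (metis add_0 diff_zero nth_map_upt)
qed

locale psi_word =
  fixes \<psi> :: "nat \<Rightarrow> 'a + nat" and w :: "nat \<Rightarrow> 'a"
  assumes admissible: "admissible \<psi>" and w_psi: "is_w_psi \<psi> w"
begin

abbreviation plen :: "nat \<Rightarrow> nat" where
  "plen i \<equiv> length (pi \<psi> i)"

lemma pi_eq_map: "1 \<le> i \<Longrightarrow> pi \<psi> i = map w [0..<plen i]"
  using w_psi by (simp add: is_w_psi_def prefix_of_inf_iff)

lemma pal_prefix_plen: "1 \<le> i \<Longrightarrow> pal_prefix w (plen i)"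
  using rev_pi[OF admissible] pi_eq_map by (simp add: pal_prefix_iff_rev)

lemma plen_less: "1 \<le> j \<Longrightarrow> j < i \<Longrightarrow> plen j < plen i"
  by (rule length_pi_less[OF admissible])

lemma plen_inj: "1 \<le> j \<Longrightarrow> 1 \<le> i \<Longrightarrow> plen j = plen i \<Longrightarrow> j = i"
  by (metis less_irrefl linorder_neqE_nat plen_less)

lemma le_plen_Suc: "i \<le> plen (Suc i)"
proof (induction i)
  case (Suc i)
  then show ?case
    using plen_less[of "Suc i" "Suc (Suc i)"] by simp
qed simp

lemma plen_Suc_Inl: "1 \<le> i \<Longrightarrow> \<psi> i = Inl a \<Longrightarrow> plen (Suc i) = 2 * plen i + 1"
  by (rule length_pi_Suc_Inl[where \<psi> = \<psi>])

lemma plen_Suc_Inr: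
  "1 \<le> i \<Longrightarrow> \<psi> i = Inr m \<Longrightarrow> 1 \<le> m \<and> m < i \<and> plen m < plen i \<and> plen (Suc i) = 2 * plen i - plen m"
  using admissible_Inr[OF admissible] length_pi_Suc_Inr[OF admissible] plen_less by blast

lemma plen_Suc_le:
  assumes "1 \<le> i"
  shows "plen (Suc i) \<le> 2 * plen i + 1"
proof (cases "\<psi> i")
  case (Inl a)
  then show ?thesis
    using plen_Suc_Inl[OF assms Inl] by simp
next
  case (Inr m)
  then show ?thesis
    using plen_Suc_Inr[OF assms Inr] by simp
qed

lemma nth_pi: "1 \<le> i \<Longrightarrow> j < plen i \<Longrightarrow> pi \<psi> i ! j = w j"
  using w_psi unfolding is_w_psi_def prefix_of_inf_def by blast

lemma w_Inl:
  assumes "1 \<le> i" "\<psi> i = Inl a"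
  shows "w (plen i) = a" and "z < plen i \<Longrightarrow> w (plen i + 1 + z) = w z"
proof -
  have "w (plen i + n) = (a # pi \<psi> i) ! n" if "n \<le> plen i" for n
    using nth_pi[of "Suc i" "plen i + n"] that assms(1) pi_Suc_Inl[where \<psi> = \<psi>, OF assms]
    by (simp add: nth_append)
  from this[of 0] this[of "Suc z"] nth_pi[OF assms(1), of z]
  show "w (plen i) = a" and "z < plen i \<Longrightarrow> w (plen i + 1 + z) = w z"
    by simp_all
qed

lemma w_Inr:
  assumes "1 \<le> i" "\<psi> i = Inr m" and z: "z < plen i - plen m"
  shows "w (plen i + z) = w (plen m + z)"
proof -
  have m: "m \<le> i" "plen m < plen i" "plen (Suc i) = 2 * plen i - plen m"
    using plen_Suc_Inr[OF assms(1,2)] by auto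
  have "w (plen i + z) = pi \<psi> (Suc i) ! (plen i + z)"
    using nth_pi[of "Suc i" "plen i + z"] z m(3) by simp
  also have "\<dots> = pi \<psi> i ! (plen m + z)"
    using pi_Suc_Inr[where \<psi> = \<psi>, OF assms(1,2) m(1)] z by (simp add: nth_append)
  also have "\<dots> = w (plen m + z)"
    using nth_pi[OF assms(1)] z by simp
  finally show ?thesis .
qed

lemma not_tset_Inr: "1 \<le> u \<Longrightarrow> u \<notin> tset \<psi> \<Longrightarrow> \<psi> u = Inr (u - 1)"
  using admissible_Inr[OF admissible, of u]
  by (cases "\<psi> u") (auto simp: tset_def)

lemma tset_Inr: "t \<in> tset \<psi> \<Longrightarrow> \<psi> t = Inr m \<Longrightarrow> 1 \<le> m \<and> m + 2 \<le> t"
  unfolding tset_def by auto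

lemma tset_ge_1: "t \<in> tset \<psi> \<Longrightarrow> 1 \<le> t"
  unfolding tset_def by simp

lemma tset_1: "Suc 0 \<in> tset \<psi>"
  using admissible_1[OF admissible] unfolding tset_def by auto

lemma tset_predecessor:
  assumes "2 \<le> i"
  obtains s where "s \<in> tset \<psi>" "s < i" "\<forall>u\<in>tset \<psi>. \<not> (s < u \<and> u < i)"
proof -
  let ?S = "{u \<in> tset \<psi>. u < i}"
  have "finite ?S" "Suc 0 \<in> ?S"
    using tset_1 assms by auto
  then show ?thesis
    using that[of "Max ?S"] Max_in[of ?S] Max_ge[of ?S] by fastforce
qed

end

section \<open>Consecutive elements of tset\<close>

lemma nat_eq_if_dvd_diff:
  fixes d x y k :: nat
  assumes "d dvd (x + k * d) - y" "y \<le> x + k * d" "y < x + d" "x < d"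
  shows "y = x"
proof -
  have "y mod d = x"
    using mod_eq_dvd_iff_nat[of y "x + k * d" d] assms by simp
  moreover have "y div d * d + y mod d = y"
    by (rule div_mult_mod_eq)
  moreover have "y div d = 0"
  proof (rule ccontr)
    assume "y div d \<noteq> 0"
    then have "d \<le> y div d * d"
      by simp
    with calculation assms(3) show False
      by linarith
  qed
  ultimately show ?thesis
    by simp
qed

locale tset_consecutive = psi_word +
  fixes s t :: nat
  assumes s_in_tset: "s \<in> tset \<psi>" and t_in_tset: "t \<in> tset \<psi>" and s_less_t: "s < t"
    and nothing_between: "\<forall>u\<in>tset \<psi>. \<not> (s < u \<and> u < t)"
begin

definition \<delta> :: nat where
  "\<delta> = plen (Suc s) - plen s"

lemma s_ge_1: "1 \<le> s"
  using tset_ge_1[OF s_in_tset] .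

lemma t_ge_1: "1 \<le> t"
  using s_ge_1 s_less_t by simp

lemma plen_Suc_s: "plen (Suc s) = plen s + \<delta>"
  using plen_less[OF s_ge_1, of "Suc s"] unfolding \<delta>_def by simp

lemma delta_pos: "0 < \<delta>"
  using plen_less[OF s_ge_1, of "Suc s"] plen_Suc_s by simp

lemma plen_between: "s \<le> j \<Longrightarrow> j \<le> t \<Longrightarrow> plen j = plen s + (j - s) * \<delta>"
proof (induction j rule: less_induct)
  case (less j)
  have "j = s \<or> j = Suc s \<or> (\<exists>k. j = s + Suc (Suc k))"
    using less.prems(1) by presburger
  then consider "j = s" | "j = Suc s" | k where "j = s + Suc (Suc k)"
    by blast
  then show ?case
  proof cases
    case 2
    then show ?thesis
      using plen_Suc_s by simp
  next
    case 3
    define u where "u = s + Suc k"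
    have "u \<notin> tset \<psi>" "1 \<le> u"
      using nothing_between less.prems 3 unfolding u_def by auto
    then have "\<psi> u = Inr (u - 1)"
      by (rule not_tset_Inr[rotated])
    then have "plen (Suc u) = 2 * plen u - plen (u - 1)"
      using plen_Suc_Inr[OF \<open>1 \<le> u\<close>] by simp
    moreover have "plen u = plen s + \<delta> + k * \<delta>" "plen (u - 1) = plen s + k * \<delta>"
      using less.IH[of u] less.IH[of "u - 1"] less.prems 3 unfolding u_def by auto
    moreover have "(Suc u - s) * \<delta> = \<delta> + \<delta> + k * \<delta>"
      unfolding u_def by simp
    ultimately have "plen (Suc u) = plen s + (Suc u - s) * \<delta>"
      by linarith
    then show ?thesis
      using 3 unfolding u_def by simp
  qed simp
qed

lemma plen_t_progression: "plen t = plen s + (t - s) * \<delta>"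
  using plen_between[of t] s_less_t by simp

lemma plen_t: "plen t = plen (t - 1) + \<delta>"
proof -
  obtain k where k: "t = Suc (s + k)"
    using s_less_t less_iff_Suc_add by blast
  then show ?thesis
    using plen_between[of t] plen_between[of "t - 1"] by simp
qed

lemma plen_s_less_t: "plen s < plen t"
  using plen_less[OF s_ge_1 s_less_t] .

lemma prefix_period_delta: "prefix_period w \<delta> (plen t)"
  using prefix_period_of_pal_prefixes[of "plen (t - 1)" "plen t" w]
    pal_prefix_plen[of "t - 1"] pal_prefix_plen[OF t_ge_1] plen_t delta_pos s_ge_1 s_less_t
  by simp

lemma delta_Inl: "\<psi> s = Inl x \<Longrightarrow> \<delta> = plen s + 1"
  using plen_Suc_Inl[OF s_ge_1] plen_Suc_s by simp

lemma delta_Inr: "\<psi> s = Inr r \<Longrightarrow> plen s = plen r + \<delta>"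
  using plen_Suc_Inr[OF s_ge_1] plen_Suc_s by fastforce

lemma period_extends_Inl:
  assumes t: "\<psi> t = Inl x" and s: "\<psi> s = Inl x"
  shows "prefix_period w \<delta> (plen (Suc t)) \<and> \<delta> < plen (Suc t) - plen t"
proof -
  let ?a = "plen t"
  have "plen s + 1 \<le> ?a"
    using plen_s_less_t by simp
  moreover have "\<delta> dvd ?a - plen s"
    using plen_t_progression by simp
  ultimately have per: "prefix_period w \<delta> (?a + 1)"
    using prefix_period_extend_copy[OF prefix_period_delta delta_pos, of "plen s" 1]
      w_Inl(1)[OF t_ge_1 t] w_Inl(1)[OF s_ge_1 s] by simp
  have "?a + 1 = \<delta> + (t - s) * \<delta>"
    using plen_t_progression delta_Inl[OF s] by linarith
  then have "\<delta> dvd ?a + 1"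
    by simp
  then have "prefix_period w \<delta> (?a + 1 + ?a)"
    using prefix_period_extend_copy[OF per delta_pos, of 0 ?a] w_Inl(2)[OF t_ge_1 t] by simp
  moreover have "\<delta> < ?a + 1"
    using delta_Inl[OF s] plen_s_less_t by simp
  ultimately show ?thesis
    using plen_Suc_Inl[OF t_ge_1 t] by (simp add: mult_2)
qed

lemma period_extends_Inr:
  assumes t: "\<psi> t = Inr m" and s: "\<psi> s = Inr m \<or> s \<le> m"
  shows "prefix_period w \<delta> (plen (Suc t)) \<and> \<delta> < plen (Suc t) - plen t"
proof -
  let ?a = "plen t"
  have m: "plen m < ?a" "plen (Suc t) = ?a + (?a - plen m)"
    using plen_Suc_Inr[OF t_ge_1 t] by auto
  \<comment> \<open>the copied block starts a multiple \<open>k \<ge> 2\<close> of \<open>\<delta>\<close> before the end of \<open>\<pi>\<^sub>t\<close>\<close>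
  obtain k where k: "2 \<le> k" "?a = plen m + k * \<delta>"
  proof (cases "\<psi> s = Inr m")
    case True
    have "(t - s + 1) * \<delta> = \<delta> + (t - s) * \<delta>"
      by simp
    then have "?a = plen m + (t - s + 1) * \<delta>"
      using plen_t_progression delta_Inr[OF True] by linarith
    then show ?thesis
      using that[of "t - s + 1"] s_less_t by simp
  next
    case False
    then have "s \<le> m" "m + 2 \<le> t"
      using s tset_Inr[OF t_in_tset t] by auto
    moreover have "plen m = plen s + (m - s) * \<delta>"
      using plen_between[of m] calculation by simp
    moreover have "(t - s) * \<delta> = (m - s) * \<delta> + (t - m) * \<delta>"
      using calculation(1,2) by (simp flip: add_mult_distrib)
    ultimately show ?thesis
      using that[of "t - m"] plen_t_progression by simp
  qed
  have "prefix_period w \<delta> (?a + (?a - plen m))"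
    by (rule prefix_period_extend_copy[OF prefix_period_delta delta_pos, of "plen m"])
      (use k m(1) w_Inr[OF t_ge_1 t] in simp_all)
  moreover have "\<delta> < ?a - plen m"
    using k delta_pos by (simp add: less_le_trans[OF _ mult_le_mono1[OF k(1)]])
  ultimately show ?thesis
    using m(2) by simp
qed

lemma reduced_condition_if_gap_free:
  assumes gap: "no_pal_prefix_between w (plen t) (plen (Suc t))"
  shows "\<psi> t \<noteq> \<psi> s \<and> (case \<psi> t of Inl a \<Rightarrow> True | Inr m \<Rightarrow> m < s)"
proof (rule ccontr)
  assume not_reduced: "\<not> ?thesis"
  have "prefix_period w \<delta> (plen (Suc t)) \<and> \<delta> < plen (Suc t) - plen t"
  proof (cases "\<psi> t")
    case (Inl x)
    then have "\<psi> s = Inl x"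
      using not_reduced by auto
    with Inl show ?thesis
      by (rule period_extends_Inl)
  next
    case (Inr m)
    then have "\<psi> s = Inr m \<or> s \<le> m"
      using not_reduced by auto
    with Inr show ?thesis
      by (rule period_extends_Inr)
  qed
  then have per: "prefix_period w \<delta> (plen (Suc t))" and gt: "\<delta> < plen (Suc t) - plen t"
    by auto
  have "pal_prefix w (plen (Suc t) - \<delta>)"
    using pal_prefix_diff_period[OF pal_prefix_plen per] gt by simp
  then show False
    using no_pal_prefix_betweenD[OF gap] gt delta_pos by fastforce
qed

context
  assumes gap_before_t: "no_pal_prefix_between w (plen (t - 1)) (plen t)"
begin

lemma delta_le_period: "0 < g \<Longrightarrow> prefix_period w g (plen t) \<Longrightarrow> \<delta> \<le> g"
  using prefix_period_ge_gap[OF gap_before_t pal_prefix_plen, of g] plen_t s_less_t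
  by (cases "g \<le> plen t") auto

lemma delta_gt_Inr:
  assumes Inr: "\<psi> s = Inr r"
  shows "plen r + 1 < \<delta>"
proof (rule ccontr)
  \<comment> \<open>otherwise the palindromic prefixes \<open>\<pi>\<^sub>s\<^sub>-\<^sub>1\<close> and \<open>\<pi>\<^sub>s\<close> give \<open>\<pi>\<^sub>t\<close> a period below \<open>\<delta>\<close>\<close>
  assume "\<not> plen r + 1 < \<delta>"
  have r: "1 \<le> r" "r < s - 1"
    using tset_Inr[OF s_in_tset Inr] by auto
  have lt: "plen r < plen (s - 1)" "plen (s - 1) < plen s"
    using plen_less[OF r(1,2)] plen_less[of "s - 1" s] r by auto
  have "prefix_period w (gcd \<delta> (plen s - plen (s - 1))) (plen t)"
    using prefix_period_gcd[OF prefix_period_delta delta_pos pal_prefix_plen pal_prefix_plen lt(2)]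
      \<open>\<not> plen r + 1 < \<delta>\<close> lt(1) plen_s_less_t r by simp
  moreover have "0 < plen s - plen (s - 1)" "plen s - plen (s - 1) < \<delta>"
    using delta_Inr[OF Inr] lt by linarith+
  then have "gcd \<delta> (plen s - plen (s - 1)) < \<delta>"
    using gcd_le2_nat[of "plen s - plen (s - 1)" \<delta>] by linarith
  ultimately show False
    using delta_le_period[of "gcd \<delta> (plen s - plen (s - 1))"] delta_pos by simp
qed

lemma period_not_extended_Inl:
  assumes t: "\<psi> t = Inl x" and reduced: "\<psi> s \<noteq> Inl x"
    and per: "prefix_period w \<delta> (plen (Suc t))" and dvd: "\<delta> dvd plen (Suc t) - plen t"
  shows False
proof -
  let ?a = "plen t"
  have b: "plen (Suc t) - ?a = ?a + 1"
    using plen_Suc_Inl[OF t_ge_1 t] by simp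
  show False
  proof (cases "\<psi> s")
    case (Inl y)
    have "w (plen (t - 1)) = w ?a"
      using prefix_periodD[OF per, of "plen (t - 1)"] plen_t b by simp
    moreover have "plen (t - 1) = plen s + (t - 1 - s) * \<delta>"
      using plen_between[of "t - 1"] s_less_t by simp
    then have "w (plen (t - 1)) = w (plen s)"
      using prefix_period_delta delta_pos plen_t plen_s_less_t
      by (simp add: prefix_period_iff_mod)
    ultimately show False
      using w_Inl(1)[OF t_ge_1 t] w_Inl(1)[OF s_ge_1 Inl] reduced Inl by simp
  next
    case (Inr r)
    have "?a + 1 = (plen r + 1) + (t - s + 1) * \<delta>"
      using plen_t_progression delta_Inr[OF Inr] by simp
    then have "\<delta> dvd (plen r + 1) + (t - s + 1) * \<delta>"
      using dvd unfolding b by simp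
    then have "\<delta> dvd plen r + 1"
      by (simp only: dvd_add_times_triv_right_iff)
    then show False
      using dvd_imp_le[of \<delta> "plen r + 1"] delta_gt_Inr[OF Inr] by simp
  qed
qed

lemma period_not_extended_Inr:
  assumes t: "\<psi> t = Inr m" and reduced: "\<psi> s \<noteq> Inr m" "m < s"
    and dvd: "\<delta> dvd plen (Suc t) - plen t"
  shows False
proof -
  have "plen (Suc t) - plen t = plen t - plen m" "1 \<le> m"
    using plen_Suc_Inr[OF t_ge_1 t] by auto
  then have dvd': "\<delta> dvd plen t - plen m" and "plen m < plen s" "plen m \<le> plen t"
    using dvd plen_less[of m s] plen_s_less_t reduced(2) by auto
  show False
  proof (cases "\<psi> s")
    case (Inl y)
    have "plen m = plen s"
      by (rule nat_eq_if_dvd_diff[of \<delta> "plen s" "t - s"])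
        (use dvd' plen_t_progression delta_Inl[OF Inl] \<open>plen m < plen s\<close> \<open>plen m \<le> plen t\<close> in simp_all)
    then show False
      using \<open>plen m < plen s\<close> by simp
  next
    case (Inr r)
    have "plen m = plen r"
      by (rule nat_eq_if_dvd_diff[of \<delta> "plen r" "t - s + 1"])
        (use dvd' plen_t_progression delta_Inr[OF Inr] delta_gt_Inr[OF Inr]
          \<open>plen m < plen s\<close> \<open>plen m \<le> plen t\<close> in \<open>simp_all add: add.assoc\<close>)
    then have "m = r"
      using plen_inj \<open>1 \<le> m\<close> tset_Inr[OF s_in_tset Inr] by simp
    then show False
      using reduced(1) Inr by simp
  qed
qed

lemma gap_free_if_reduced_condition:
  assumes "\<psi> t \<noteq> \<psi> s" "case \<psi> t of Inl a \<Rightarrow> True | Inr m \<Rightarrow> m < s"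
  shows "no_pal_prefix_between w (plen t) (plen (Suc t))"
  unfolding no_pal_prefix_between_def
proof (intro allI impI notI)
  fix c assume c: "plen t < c" "c < plen (Suc t)" "pal_prefix w c"
  have pa: "pal_prefix w (plen t)" and pb: "pal_prefix w (plen (Suc t))"
    using pal_prefix_plen t_ge_1 by simp_all
  have "prefix_period w \<delta> (plen (Suc t)) \<and> \<delta> dvd plen (Suc t) - plen t"
    by (rule least_period_extends[OF pa pb c(3) c(1,2)
          plen_Suc_le[OF t_ge_1] prefix_period_delta delta_pos delta_le_period])
  then show False
    using period_not_extended_Inl period_not_extended_Inr assms by (cases "\<psi> t") auto
qed

end

end

section \<open>Reduced functions and palindromic prefix lengths\<close>

lemma enumerate_Suc_le:
  fixes S :: "'a :: wellorder set"
  assumes "infinite S" "c \<in> S" "enumerate S n < c"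
  shows "enumerate S (Suc n) \<le> c"
  unfolding enumerate_Suc''[OF assms(1)] by (rule Least_le) (use assms(2,3) in simp)

lemma enumerate_eqI:
  fixes S :: "'a :: wellorder set"
  assumes "infinite S" and "f 0 = enumerate S 0" and "\<And>n. f n \<in> S" and "\<And>n. f n < f (Suc n)"
    and "\<And>n c. c \<in> S \<Longrightarrow> f n < c \<Longrightarrow> f (Suc n) \<le> c"
  shows "f n = enumerate S n"
proof (induction n)
  case (Suc n)
  show ?case
    unfolding enumerate_Suc''[OF assms(1)] Suc.IH[symmetric]
    by (rule Least_equality[symmetric]) (use assms(3-5) in auto)
qed (fact assms(2))

text \<open>\<open>pal_length w i\<close> is \<open>n\<^sub>i\<^sub>+\<^sub>1\<close> in the 1-based numbering of the paper.\<close>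

abbreviation pal_length :: "(nat \<Rightarrow> 'a) \<Rightarrow> nat \<Rightarrow> nat" where
  "pal_length w \<equiv> enumerate (pal_prefix_lengths w)"

lemma pal_length_0: "pal_length w 0 = 0"
  using pal_prefix_0[of w] by (simp add: enumerate_0 Least_eq_0)

context psi_word
begin

lemma reduced_if_gap_free:
  assumes gap: "\<And>i. 1 \<le> i \<Longrightarrow> no_pal_prefix_between w (plen i) (plen (Suc i))"
  shows "reduced \<psi>"
  unfolding reduced_def
proof (rule conjI[OF admissible], intro allI impI)
  fix s t
  assume "s \<in> tset \<psi> \<and> t \<in> tset \<psi> \<and> s < t \<and> (\<forall>u\<in>tset \<psi>. \<not> (s < u \<and> u < t))"
  then interpret tset_consecutive \<psi> w s t
    by unfold_locales auto
  show "\<psi> t \<noteq> \<psi> s \<and> (case \<psi> t of Inl a \<Rightarrow> True | Inr m \<Rightarrow> m < s)"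
    using reduced_condition_if_gap_free gap s_ge_1 s_less_t by simp
qed

lemma gap_free_if_reduced:
  assumes red: "reduced \<psi>"
  shows "1 \<le> i \<Longrightarrow> no_pal_prefix_between w (plen i) (plen (Suc i))"
proof (induction i rule: less_induct)
  case (less i)
  consider "i = 1" | "2 \<le> i" "i \<notin> tset \<psi>" | "2 \<le> i" "i \<in> tset \<psi>"
    using less.prems by linarith
  then show ?case
  proof cases
    case 1
    then have "plen (Suc i) = 1"
      using admissible_1[OF admissible] plen_Suc_Inl[of 1] by auto
    then show ?thesis
      using 1 unfolding no_pal_prefix_between_def by simp
  next
    case 2
    then have "plen (Suc i) = 2 * plen i - plen (i - 1)" "plen (i - 1) < plen i"
      using plen_Suc_Inr not_tset_Inr by auto
    then show ?thesis
      using no_pal_prefix_between_mirror[OF _ _ pal_prefix_plen] less.IH[of "i - 1"] 2 by simp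
  next
    case 3
    obtain s where "s \<in> tset \<psi>" "s < i" "\<forall>u\<in>tset \<psi>. \<not> (s < u \<and> u < i)"
      using tset_predecessor 3 by blast
    then interpret tset_consecutive \<psi> w s i
      using 3 by unfold_locales auto
    have "\<psi> i \<noteq> \<psi> s \<and> (case \<psi> i of Inl a \<Rightarrow> True | Inr m \<Rightarrow> m < s)"
      using red s_in_tset t_in_tset s_less_t nothing_between unfolding reduced_def by blast
    moreover have "no_pal_prefix_between w (plen (i - 1)) (plen i)"
      using less.IH[of "i - 1"] 3 by simp
    ultimately show ?thesis
      using gap_free_if_reduced_condition by blast
  qed
qed

context
  assumes infinite_pal: "infinite (pal_prefix_lengths w)"
begin

lemma pal_length_Suc_le: "pal_length w (Suc j) \<le> 2 * pal_length w j + 1"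
proof -
  define k where "k = (LEAST k. pal_length w j < plen (Suc k))"
  have "pal_length w j < plen (Suc (Suc (pal_length w j)))"
    using le_plen_Suc[of "Suc (pal_length w j)"] by simp
  then have k: "pal_length w j < plen (Suc k)"
    unfolding k_def by (rule LeastI)
  then obtain k' where k': "k = Suc k'"
    by (cases k) auto
  then have "plen (Suc k') \<le> pal_length w j"
    using not_less_Least[of k' "\<lambda>k. pal_length w j < plen (Suc k)"] unfolding k_def by simp
  moreover have "pal_length w (Suc j) \<le> plen (Suc k)"
    using enumerate_Suc_le[OF infinite_pal pal_prefix_plen k] by simp
  ultimately show ?thesis
    using plen_Suc_le[of "Suc k'"] k' by simp
qed

lemma plen_eq_pal_length:
  assumes gap: "\<And>i. 1 \<le> i \<Longrightarrow> no_pal_prefix_between w (plen i) (plen (Suc i))"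
  shows "plen (Suc i) = pal_length w i"
proof (rule enumerate_eqI[OF infinite_pal, of "\<lambda>i. plen (Suc i)"])
  show "plen (Suc 0) = pal_length w 0"
    using pal_length_0 by simp
  show "pal_prefix w (plen (Suc n))" "plen (Suc n) < plen (Suc (Suc n))" for n
    using pal_prefix_plen plen_less by simp_all
  show "plen (Suc (Suc n)) \<le> c" if "pal_prefix w c" "plen (Suc n) < c" for n c
    using no_pal_prefix_betweenD[OF gap that] by simp
qed

end

end

section \<open>Existence and uniqueness\<close>

lemma psi_eq_if_same_lengths:
  assumes "psi_word \<psi>1 w" "psi_word \<psi>2 w"
    and same: "\<And>i. 1 \<le> i \<Longrightarrow> length (pi \<psi>1 i) = length (pi \<psi>2 i)" and n: "1 \<le> n"
  shows "\<psi>1 n = \<psi>2 n"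
proof -
  interpret A: psi_word \<psi>1 w by fact
  interpret B: psi_word \<psi>2 w by fact
  show ?thesis
  proof (cases "\<psi>1 n")
    case (Inl a)
    show ?thesis
    proof (cases "\<psi>2 n")
      case (Inl b)
      then show ?thesis
        using A.w_Inl(1)[OF n \<open>\<psi>1 n = Inl a\<close>] B.w_Inl(1)[OF n Inl] same[OF n] Inl \<open>\<psi>1 n = Inl a\<close>
        by simp
    next
      case (Inr m)
      then show ?thesis
        using A.plen_Suc_Inl[OF n Inl] B.plen_Suc_Inr[OF n Inr] same n by force
    qed
  next
    case (Inr m1)
    show ?thesis
    proof (cases "\<psi>2 n")
      case (Inl b)
      then show ?thesis
        using A.plen_Suc_Inr[OF n Inr] B.plen_Suc_Inl[OF n Inl] same n by force
    next
      case (Inr m2)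
      have m1: "1 \<le> m1" "A.plen m1 < A.plen n" "A.plen (Suc n) = 2 * A.plen n - A.plen m1"
        using A.plen_Suc_Inr[OF n \<open>\<psi>1 n = Inr m1\<close>] by auto
      have m2: "1 \<le> m2" "B.plen m2 < B.plen n" "B.plen (Suc n) = 2 * B.plen n - B.plen m2"
        using B.plen_Suc_Inr[OF n Inr] by auto
      have "A.plen m1 = A.plen m2"
        using m1 m2 same[of m2] same[OF n] same[of "Suc n"] n by simp
      then show ?thesis
        using A.plen_inj[OF m1(1) m2(1)] Inr \<open>\<psi>1 n = Inr m1\<close> by simp
    qed
  qed
qed

text \<open>If \<open>n\<^sub>i\<^sub>+\<^sub>1 = 2 n\<^sub>i + 1\<close> the next palindrome has a new central letter; otherwise it reflects
  the palindromic prefix of length \<open>2 n\<^sub>i - n\<^sub>i\<^sub>+\<^sub>1\<close>, which is \<open>\<pi>\<^sub>m\<close> for the \<open>m\<close> chosen below.\<close>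

definition canonical_psi :: "(nat \<Rightarrow> 'a) \<Rightarrow> nat \<Rightarrow> 'a + nat" where
  "canonical_psi w n =
    (let a = pal_length w (n - 1); b = pal_length w n
     in if b = 2 * a + 1 then Inl (w a) else Inr (Suc (LEAST q. pal_length w q = 2 * a - b)))"

context
  fixes w :: "nat \<Rightarrow> 'a"
  assumes infinite_pal: "infinite (pal_prefix_lengths w)"
    and growth: "\<And>i. pal_length w (Suc i) \<le> 2 * pal_length w i + 1"
begin

lemma canonical_psi_Inr:
  assumes n: "1 \<le> n" and ne: "pal_length w n \<noteq> 2 * pal_length w (n - 1) + 1"
  obtains m where "canonical_psi w n = Inr m" "1 \<le> m" "m < n"
    "pal_length w (m - 1) = 2 * pal_length w (n - 1) - pal_length w n"
proof -
  let ?a = "pal_length w (n - 1)" and ?b = "pal_length w n"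
  define q where "q = (LEAST q. pal_length w q = 2 * ?a - ?b)"
  have "?a < ?b" "?b \<le> 2 * ?a"
    using growth[of "n - 1"] ne n infinite_pal by simp_all
  then have "pal_prefix w (2 * ?a - ?b)"
    using pal_prefix_reflect enumerate_in_set[OF infinite_pal] by blast
  then obtain q' where "pal_length w q' = 2 * ?a - ?b"
    using enumerate_Ex[OF infinite_pal] by blast
  then have q: "pal_length w q = 2 * ?a - ?b"
    unfolding q_def by (rule LeastI)
  moreover have "2 * ?a - ?b < ?a"
    using \<open>?a < ?b\<close> \<open>?b \<le> 2 * ?a\<close> by linarith
  ultimately have "Suc q < n"
    using infinite_pal n by (metis enumerate_mono_iff less_diff_conv add.commute plus_1_eq_Suc)
  moreover have "canonical_psi w n = Inr (Suc q)"
    using ne unfolding canonical_psi_def q_def Let_def by simp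
  ultimately show ?thesis
    using that q by simp
qed

lemma admissible_canonical_psi: "admissible (canonical_psi w)"
  unfolding admissible_def
proof (intro allI impI)
  fix n :: nat assume n: "1 \<le> n"
  show "case canonical_psi w n of Inl a \<Rightarrow> True | Inr m \<Rightarrow> 1 \<le> m \<and> m \<le> n - 1"
  proof (cases "pal_length w n = 2 * pal_length w (n - 1) + 1")
    case True
    then show ?thesis
      unfolding canonical_psi_def by simp
  next
    case False
    then obtain m where "canonical_psi w n = Inr m" "1 \<le> m" "m < n"
      using canonical_psi_Inr[OF n] by blast
    then show ?thesis
      by simp
  qed
qed

lemma pi_canonical_psi: "1 \<le> i \<Longrightarrow> pi (canonical_psi w) i = map w [0..<pal_length w (i - 1)]"
proof (induction i rule: less_induct)
  case (less i)
  show ?case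
  proof (cases "i = 1")
    case False
    then obtain n where i: "i = Suc n" and n: "1 \<le> n"
      using less.prems by (cases i) auto
    let ?a = "pal_length w (n - 1)" and ?b = "pal_length w n"
    have IH: "pi (canonical_psi w) n = map w [0..<?a]"
      using less.IH i n by simp
    have pal: "pal_prefix w ?a" "pal_prefix w ?b" and "?a < ?b"
      using enumerate_in_set[OF infinite_pal] n infinite_pal by simp_all
    show ?thesis
    proof (cases "?b = 2 * ?a + 1")
      case True
      then have "canonical_psi w n = Inl (w ?a)"
        unfolding canonical_psi_def by simp
      then show ?thesis
        using pi_Suc_Inl[where \<psi> = "canonical_psi w", OF n] IH i True map_pal_prefix_Inl pal
        by simp
    next
      case False
      obtain m where m: "canonical_psi w n = Inr m" "1 \<le> m" "m < n"
        "pal_length w (m - 1) = 2 * ?a - ?b"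
        using canonical_psi_Inr[OF n False] by blast
      have "pi (canonical_psi w) m = map w [0..<2 * ?a - ?b]"
        using less.IH[of m] m i by simp
      then show ?thesis
        using pi_Suc_Inr[where \<psi> = "canonical_psi w", OF n m(1)] m(3) IH i
          map_pal_prefix_Inr[OF pal \<open>?a < ?b\<close>] growth[of "n - 1"] n False
        by simp
    qed
  qed (simp add: pal_length_0)
qed

lemma psi_word_canonical_psi: "psi_word (canonical_psi w) w"
  by unfold_locales
    (auto simp: admissible_canonical_psi is_w_psi_def prefix_of_inf_iff pi_canonical_psi)

lemma reduced_canonical_psi: "reduced (canonical_psi w)"
proof -
  interpret psi_word "canonical_psi w" w
    by (fact psi_word_canonical_psi)
  show ?thesis
  proof (rule reduced_if_gap_free)
    fix i :: nat assume "1 \<le> i"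
    have "plen i = pal_length w (i - 1)" "plen (Suc i) = pal_length w (Suc (i - 1))"
      using pi_canonical_psi \<open>1 \<le> i\<close> by simp_all
    then show "no_pal_prefix_between w (plen i) (plen (Suc i))"
      unfolding no_pal_prefix_between_def
      using enumerate_Suc_le[OF infinite_pal] by (metis not_le)
  qed
qed

end

lemma reduced_psi_unique:
  assumes "infinite (pal_prefix_lengths w)"
    and "reduced \<psi>1" "is_w_psi \<psi>1 w" "reduced \<psi>2" "is_w_psi \<psi>2 w" and "1 \<le> n"
  shows "\<psi>1 n = \<psi>2 n"
proof (rule psi_eq_if_same_lengths)
  show psi1: "psi_word \<psi>1 w" and psi2: "psi_word \<psi>2 w"
    using assms unfolding reduced_def by (simp_all add: psi_word.intro)
  fix i :: nat assume "1 \<le> i"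
  then obtain j where "i = Suc j"
    by (cases i) auto
  then show "length (pi \<psi>1 i) = length (pi \<psi>2 i)"
    using psi_word.plen_eq_pal_length[OF psi1 assms(1) psi_word.gap_free_if_reduced[OF psi1]]
      psi_word.plen_eq_pal_length[OF psi2 assms(1) psi_word.gap_free_if_reduced[OF psi2]] assms
    by simp
qed fact

theorem theorem4p14:
  fixes w :: "nat \<Rightarrow> 'a"
  assumes "infinite (pal_prefix_lengths w)"
  shows "((\<forall>i. enumerate (pal_prefix_lengths w) (Suc i) \<le> 2 * enumerate (pal_prefix_lengths w) i + 1)
            \<longleftrightarrow> (\<exists>\<psi>. admissible \<psi> \<and> is_w_psi \<psi> w))
       \<and> ((\<exists>\<psi>. admissible \<psi> \<and> is_w_psi \<psi> w) \<longleftrightarrow> (\<exists>\<psi>. reduced \<psi> \<and> is_w_psi \<psi> w))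
       \<and> (\<forall>\<psi>1 \<psi>2. reduced \<psi>1 \<and> is_w_psi \<psi>1 w \<and> reduced \<psi>2 \<and> is_w_psi \<psi>2 w
            \<longrightarrow> (\<forall>n\<ge>1. \<psi>1 n = \<psi>2 n))"
proof -
  have "\<exists>\<psi>. reduced \<psi> \<and> is_w_psi \<psi> w" if "\<forall>i. pal_length w (Suc i) \<le> 2 * pal_length w i + 1"
    using reduced_canonical_psi[OF assms] psi_word.w_psi[OF psi_word_canonical_psi[OF assms]] that
    by blast
  moreover have "\<exists>\<psi>. admissible \<psi> \<and> is_w_psi \<psi> w" if "\<exists>\<psi>. reduced \<psi> \<and> is_w_psi \<psi> w"
    using that unfolding reduced_def by blast
  moreover have "\<forall>i. pal_length w (Suc i) \<le> 2 * pal_length w i + 1"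
    if "\<exists>\<psi>. admissible \<psi> \<and> is_w_psi \<psi> w"
    using that psi_word.pal_length_Suc_le[OF _ assms] psi_word.intro by blast
  ultimately show ?thesis
    using reduced_psi_unique[OF assms] by blast
qed

end
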